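(* Let $Y,T\subset\mathbb{P}^r$ be integral projective varieties such that $\langle Y\cup T\rangle=\mathbb{P}^r$ and $M=\langle Y\rangle$ has dimension $m\le r-2$. Then there is no point $o\in\mathbb{P}^r\setminus(M\cup T)$ such that the linear projection $\pi_o:\mathbb{P}^r\setminus\{o\}\to\mathbb{P}^{r-1}$ satisfies $\pi_o(T)\subseteq\pi_o(Y)$.
   Context: Work over an algebraically closed field of characteristic zero; $\langle\cdot\rangle$ denotes linear span. *)

theory Defs
  imports "HOL-Analysis.Analysis" "HOL-Library.Poly_Mapping" "HOL-Computational_Algebra.Polynomial"
begin

text \<open>Projective space P^r over a field 'k is modelled via the vector space 'k^'n with
  CARD('n) = r + 1.  A subset of P^r is represented by its affine cone minus the origin,
  i.e. a set of nonzero vectors stable under nonzero scaling.\<close>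

definition alg_closed :: "'k::field itself \<Rightarrow> bool" where
  "alg_closed _ \<longleftrightarrow> (\<forall>p :: 'k poly. degree p \<ge> 1 \<longrightarrow> (\<exists>x. poly p x = 0))"

type_synonym ('n, 'k) mpoly = "('n \<Rightarrow>\<^sub>0 nat) \<Rightarrow>\<^sub>0 'k"

definition mpoly_eval :: "('n, 'k::comm_ring_1) mpoly \<Rightarrow> 'k ^ 'n \<Rightarrow> 'k" where
  "mpoly_eval p x = (\<Sum>mm \<in> Poly_Mapping.keys p. Poly_Mapping.lookup p mm * (\<Prod>i \<in> Poly_Mapping.keys (mm :: 'n \<Rightarrow>\<^sub>0 nat). (x $ i) ^ Poly_Mapping.lookup mm i))"

definition homogeneous :: "('n, 'k::zero) mpoly \<Rightarrow> bool" where
  "homogeneous p \<longleftrightarrow> (\<exists>d. \<forall>mm \<in> Poly_Mapping.keys p. (\<Sum>i \<in> Poly_Mapping.keys (mm :: 'n \<Rightarrow>\<^sub>0 nat). Poly_Mapping.lookup mm i) = d)"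

definition is_cone :: "('k::field ^ 'n) set \<Rightarrow> bool" where
  "is_cone S \<longleftrightarrow> 0 \<notin> S \<and> (\<forall>x \<in> S. \<forall>c. c \<noteq> 0 \<longrightarrow> c *s x \<in> S)"

definition proj_zariski_closed :: "('k::field ^ 'n) set \<Rightarrow> bool" where
  "proj_zariski_closed S \<longleftrightarrow>
     (\<exists>F :: ('n, 'k) mpoly set. (\<forall>f \<in> F. homogeneous f) \<and>
        S = {x. x \<noteq> 0 \<and> (\<forall>f \<in> F. mpoly_eval f x = 0)})"

definition integral_proj_variety :: "('k::field ^ 'n) set \<Rightarrow> bool" where
  "integral_proj_variety X \<longleftrightarrow> proj_zariski_closed X \<and> X \<noteq> {} \<and>
     (\<forall>A B. proj_zariski_closed A \<longrightarrow> proj_zariski_closed B \<longrightarrow> X \<subseteq> A \<union> B \<longrightarrow>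
        X \<subseteq> A \<or> X \<subseteq> B)"

text \<open>Linear projection from the point [o]: P^r \ {o} \<rightarrow> P^{r-1} = P(k^{r+1}/<o>).
  The image of [x] is the point of P(k^{r+1}/<o>) given by the plane span{o,x}.\<close>
definition lin_proj :: "'k::field ^ 'n \<Rightarrow> 'k ^ 'n \<Rightarrow> ('k ^ 'n) set" where
  "lin_proj c x = vec.span {c, x}"

end

theory Submission
  imports Defs
begin

text \<open>If \<open>\<pi>\<^sub>o(T) \<subseteq> \<pi>\<^sub>o(Y)\<close>, every point of \<open>T\<close> lies on a line through \<open>o\<close> and a point
  of \<open>Y\<close>, so \<open>T \<subseteq> \<langle>o, M\<rangle>\<close>. Then \<open>\<langle>Y \<union> T\<rangle> \<subseteq> \<langle>o, M\<rangle>\<close>, a linear space of dimension at most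
  \<open>m + 1 \<le> r - 1\<close>, contradicting \<open>\<langle>Y \<union> T\<rangle> = \<P>\<^sup>r\<close>.\<close>

lemma mem_lin_proj: "x \<in> lin_proj c x"
  unfolding lin_proj_def by (simp add: vec.span_base)

lemma lin_proj_image_subset_imp_subset_span_insert:
  assumes "lin_proj c ` T \<subseteq> lin_proj c ` Y"
  shows "T \<subseteq> vec.span (insert c Y)"
proof
  fix t assume "t \<in> T"
  then obtain y where y: "y \<in> Y" "lin_proj c t = lin_proj c y"
    using assms by blast
  have "t \<in> vec.span {c, y}"
    using mem_lin_proj[of t c] y(2) unfolding lin_proj_def by simp
  also have "\<dots> \<subseteq> vec.span (insert c Y)"
    using y(1) by (intro vec.span_mono) auto
  finally show "t \<in> vec.span (insert c Y)" .
qed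

lemma card_le_dim_span_Suc_if_spanning_subset_span_insert:
  fixes Y T :: "('k::field ^ 'n) set"
  assumes "vec.span (Y \<union> T) = UNIV" and "T \<subseteq> vec.span (insert c Y)"
  shows "CARD('n) \<le> vec.dim (vec.span Y) + 1"
proof -
  have "Y \<union> T \<subseteq> vec.span (insert c Y)"
    using assms(2) vec.span_superset by blast
  then have "UNIV \<subseteq> vec.span (insert c Y)"
    using assms(1) vec.span_minimal vec.subspace_span by metis
  then have "vec.dim (UNIV :: ('k ^ 'n) set) \<le> vec.dim (vec.span (insert c Y))"
    by (rule vec.dim_subset)
  also have "\<dots> \<le> vec.dim Y + 1"
    by (simp add: vec.dim_insert)
  finally show ?thesis
    by (simp add: card_cart_basis)
qed

theorem lemma3p7:
  fixes Y T :: "('k::field_char_0 ^ 'n) set"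
  assumes "alg_closed TYPE('k)"
    and "integral_proj_variety Y" and "integral_proj_variety T"
    and "vec.span (Y \<union> T) = UNIV"
    and "vec.dim (vec.span Y) - 1 + 2 \<le> CARD('n) - 1"
  shows "\<not> (\<exists>c. c \<noteq> 0 \<and> c \<notin> vec.span Y \<and> c \<notin> T \<and>
              lin_proj c ` T \<subseteq> lin_proj c ` Y)"
proof
  assume "\<exists>c. c \<noteq> 0 \<and> c \<notin> vec.span Y \<and> c \<notin> T \<and> lin_proj c ` T \<subseteq> lin_proj c ` Y"
  then obtain c where "lin_proj c ` T \<subseteq> lin_proj c ` Y" by blast
  then have "T \<subseteq> vec.span (insert c Y)"
    by (rule lin_proj_image_subset_imp_subset_span_insert)
  with assms(4) have "CARD('n) \<le> vec.dim (vec.span Y) + 1"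
    by (rule card_le_dim_span_Suc_if_spanning_subset_span_insert)
  with assms(5) show False by simp
qed

end
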